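(* Let $\mathcal H_S$ and $\mathcal H_A$ be finite-dimensional Hilbert spaces, let $\rho_{SA}$ be a density matrix on $\mathcal H_S\otimes\mathcal H_A$, and let $\{|r_k\rangle\}$ be an orthonormal basis of $\mathcal H_S$. Suppose that for every orthonormal basis $\{|a\rangle\}$ of $\mathcal H_A$ and every outcome $a$ with $p_a>0$, the conditional state $\rho_{S|a}$ is diagonal in the basis $\{|r_k\rangle\}$. Then $$\rho_{SA}=\sum_k|r_k\rangle\langle r_k|\otimes C^A_k$$ for some positive semidefinite operators $C^A_k$ on $\mathcal H_A$.
   Context: For an orthonormal basis $\{|a\rangle\}$ of $\mathcal H_A$ with projectors $\Pi^A_a=|a\rangle\langle a|$: $p_a=\mathrm{Tr}[(I^S\otimes\Pi^A_a)\rho_{SA}]$ and, when $p_a>0$, $\rho_{S|a}=\mathrm{Tr}_A[(I^S\otimes\Pi^A_a)\rho_{SA}(I^S\otimes\Pi^A_a)]/p_a$. *)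

theory Defs
  imports "Jordan_Normal_Form.Matrix"
begin

text \<open>Finite-dimensional Hilbert spaces are modelled as C^d; operators as complex
  matrices (Jordan_Normal_Form). The tensor product C^dS (x) C^dA is C^(dS*dA) with
  the index of e_i (x) e_a equal to i*dA + a.\<close>

definition mtrace :: "complex mat \<Rightarrow> complex" where
  "mtrace M = (\<Sum>i<dim_row M. M $$ (i, i))"

definition adjoint :: "complex mat \<Rightarrow> complex mat" where
  "adjoint M = mat (dim_col M) (dim_row M) (\<lambda>(i, j). cnj (M $$ (j, i)))"

definition hermitian :: "complex mat \<Rightarrow> bool" where
  "hermitian M \<longleftrightarrow> dim_row M = dim_col M \<and> adjoint M = M"

definition psd :: "complex mat \<Rightarrow> bool" where
  "psd M \<longleftrightarrow> hermitian M \<and>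
     (\<forall>v \<in> carrier_vec (dim_row M). Re ((M *\<^sub>v v) \<bullet>c v) \<ge> 0)"

definition density_matrix :: "nat \<Rightarrow> complex mat \<Rightarrow> bool" where
  "density_matrix n \<rho> \<longleftrightarrow> \<rho> \<in> carrier_mat n n \<and> psd \<rho> \<and> mtrace \<rho> = 1"

text \<open>The columns of a unitary matrix form an orthonormal basis, and every orthonormal
  basis (ordered) arises this way.\<close>
definition unitary :: "nat \<Rightarrow> complex mat \<Rightarrow> bool" where
  "unitary n U \<longleftrightarrow> U \<in> carrier_mat n n \<and> adjoint U * U = 1\<^sub>m n"

definition ketbra :: "complex vec \<Rightarrow> complex mat" where
  "ketbra v = mat (dim_vec v) (dim_vec v) (\<lambda>(i, j). v $ i * cnj (v $ j))"

definition kron :: "complex mat \<Rightarrow> complex mat \<Rightarrow> complex mat" where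
  "kron A B = mat (dim_row A * dim_row B) (dim_col A * dim_col B)
     (\<lambda>(i, j). A $$ (i div dim_row B, j div dim_col B) * B $$ (i mod dim_row B, j mod dim_col B))"

definition ptrace_A :: "nat \<Rightarrow> nat \<Rightarrow> complex mat \<Rightarrow> complex mat" where
  "ptrace_A dS dA M = mat dS dS (\<lambda>(i, j). \<Sum>a<dA. M $$ (i * dA + a, j * dA + a))"

definition outcome_prob :: "nat \<Rightarrow> complex mat \<Rightarrow> complex vec \<Rightarrow> real" where
  "outcome_prob dS \<rho> v = Re (mtrace (kron (1\<^sub>m dS) (ketbra v) * \<rho>))"

definition cond_state :: "nat \<Rightarrow> nat \<Rightarrow> complex mat \<Rightarrow> complex vec \<Rightarrow> complex mat" where
  "cond_state dS dA \<rho> v =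
     (1 / complex_of_real (outcome_prob dS \<rho> v)) \<cdot>\<^sub>m
       ptrace_A dS dA (kron (1\<^sub>m dS) (ketbra v) * \<rho> * kron (1\<^sub>m dS) (ketbra v))"

definition diagonal_in :: "nat \<Rightarrow> complex mat \<Rightarrow> complex mat \<Rightarrow> bool" where
  "diagonal_in n R \<sigma> \<longleftrightarrow> (\<forall>k<n. \<forall>l<n. k \<noteq> l \<longrightarrow> (adjoint R * \<sigma> * R) $$ (k, l) = 0)"

end

theory Submission
  imports Defs "Jordan_Normal_Form.Determinant"
begin

(* Write B_kl(u, w) = <r_k \<otimes> u| \<rho> |r_l \<otimes> w>. If v belongs to an orthonormal basis of H_A and
   p_v > 0, diagonality of \<rho>_{S|v} in the basis (r_k) says exactly that B_kl(v, v) = 0 for k \<noteq> l;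
   if p_v = 0, the vectors e_i \<otimes> v are isotropic for the positive \<rho>, so again B_kl(v, v) = 0.
   Every unit vector of a coordinate plane span {e_c, e_d} is a column of a unitary, so polarization
   gives B_kl = 0 for k \<noteq> l. Hence \<rho> is block diagonal in the basis (r_k \<otimes> e_c), and its diagonal
   blocks C_k = B_kk are compressions of \<rho>, hence positive. *)

section \<open>The sesquilinear form of a matrix\<close>

definition unit_fun :: "nat \<Rightarrow> nat \<Rightarrow> complex" where
  "unit_fun i = (\<lambda>j. if j = i then 1 else 0)"

lemma sum_unit_fun: "j < n \<Longrightarrow> (\<Sum>i<n. f i * unit_fun i j) = f j"
  by (simp add: unit_fun_def if_distrib cong: if_cong)

definition sesq :: "nat \<Rightarrow> complex mat \<Rightarrow> (nat \<Rightarrow> complex) \<Rightarrow> (nat \<Rightarrow> complex) \<Rightarrow> complex" where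
  "sesq n M x y = (\<Sum>z<n. \<Sum>w<n. cnj (x z) * M $$ (z, w) * y w)"

lemma sesq_cong:
  assumes "\<And>z. z < n \<Longrightarrow> x z = x' z" "\<And>z. z < n \<Longrightarrow> y z = y' z"
  shows "sesq n M x y = sesq n M x' y'"
  unfolding sesq_def using assms by (auto intro!: sum.cong)

lemma sesq_sum:
  assumes "finite I" "finite J"
  shows "sesq n M (\<lambda>z. \<Sum>i\<in>I. a i * x i z) (\<lambda>w. \<Sum>j\<in>J. b j * y j w)
       = (\<Sum>i\<in>I. \<Sum>j\<in>J. cnj (a i) * b j * sesq n M (x i) (y j))"
proof -
  have "sesq n M (\<lambda>z. \<Sum>i\<in>I. a i * x i z) (\<lambda>w. \<Sum>j\<in>J. b j * y j w)
     = (\<Sum>z<n. \<Sum>w<n. \<Sum>i\<in>I. \<Sum>j\<in>J. cnj (a i) * b j * (cnj (x i z) * M $$ (z, w) * y j w))"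
    unfolding sesq_def by (simp add: cnj_sum sum_distrib_left sum_distrib_right mult_ac)
  also have "\<dots> = (\<Sum>i\<in>I. \<Sum>j\<in>J. \<Sum>z<n. \<Sum>w<n. cnj (a i) * b j * (cnj (x i z) * M $$ (z, w) * y j w))"
    by (subst sum.swap, subst (2) sum.swap, subst (3) sum.swap, subst (2) sum.swap) (rule refl)
  also have "\<dots> = (\<Sum>i\<in>I. \<Sum>j\<in>J. cnj (a i) * b j * sesq n M (x i) (y j))"
    unfolding sesq_def by (simp add: sum_distrib_left)
  finally show ?thesis .
qed

lemma sesq_add:
  "sesq n M (\<lambda>z. a * x z + b * y z) (\<lambda>w. c * x' w + d * y' w)
   = cnj a * c * sesq n M x x' + cnj a * d * sesq n M x y'
     + cnj b * c * sesq n M y x' + cnj b * d * sesq n M y y'"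
  unfolding sesq_def by (simp add: sum.distrib sum_distrib_left algebra_simps)

lemma sesq_unit_fun:
  assumes "x < n" "y < n"
  shows "sesq n M (unit_fun x) (unit_fun y) = M $$ (x, y)"
proof -
  have "sesq n M (unit_fun x) (unit_fun y) = (\<Sum>z<n. if z = x then M $$ (z, y) else 0)"
    unfolding sesq_def unit_fun_def using assms(2)
    by (intro sum.cong refl) (simp add: sum.delta' if_distrib cong: if_cong)
  also have "\<dots> = M $$ (x, y)" using assms(1) by (simp add: sum.delta')
  finally show ?thesis .
qed

lemma sesq_smult_mat:
  assumes "M \<in> carrier_mat n n"
  shows "sesq n (a \<cdot>\<^sub>m M) x y = a * sesq n M x y"
  using assms unfolding sesq_def by (auto simp: sum_distrib_left mult_ac intro!: sum.cong)

lemma sesq_vec: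
  assumes "M \<in> carrier_mat n n" "u \<in> carrier_vec n"
  shows "(M *\<^sub>v u) \<bullet>c u = sesq n M (vec_index u) (vec_index u)"
  using assms unfolding sesq_def
  by (auto simp: scalar_prod_def sum_distrib_right sum_distrib_left mult_ac atLeast0LessThan intro!: sum.cong)

lemma hermitian_entry:
  assumes "hermitian M" "M \<in> carrier_mat n n" "z < n" "w < n"
  shows "M $$ (w, z) = cnj (M $$ (z, w))"
proof -
  have "adjoint M $$ (w, z) = M $$ (w, z)" using assms(1) unfolding hermitian_def by simp
  thus ?thesis using assms(2-4) unfolding adjoint_def by auto
qed

lemma sesq_cnj_hermitian:
  assumes "hermitian M" "M \<in> carrier_mat n n"
  shows "cnj (sesq n M x y) = sesq n M y x"
proof -
  have "cnj (sesq n M x y) = (\<Sum>z<n. \<Sum>w<n. cnj (y w) * M $$ (w, z) * x z)"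
    unfolding sesq_def cnj_sum
  proof (intro sum.cong refl)
    fix z w assume "z \<in> {..<n}" "w \<in> {..<n}"
    then have "M $$ (w, z) = cnj (M $$ (z, w))" by (intro hermitian_entry[OF assms]) auto
    then show "cnj (cnj (x z) * M $$ (z, w) * y w) = cnj (y w) * M $$ (w, z) * x z" by simp
  qed
  also have "\<dots> = sesq n M y x" unfolding sesq_def by (rule sum.swap)
  finally show ?thesis .
qed

lemma sesq_psd_nonneg:
  assumes "psd M" "M \<in> carrier_mat n n"
  shows "Re (sesq n M x x) \<ge> 0"
proof -
  have "sesq n M x x = (M *\<^sub>v vec n x) \<bullet>c vec n x"
    using assms(2) by (subst sesq_vec) (auto intro: sesq_cong)
  then show ?thesis using assms unfolding psd_def by auto
qed

lemma psd_sesqI: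
  assumes "M \<in> carrier_mat n n"
    and "\<And>z w. z < n \<Longrightarrow> w < n \<Longrightarrow> M $$ (w, z) = cnj (M $$ (z, w))"
    and "\<And>x. Re (sesq n M x x) \<ge> 0"
  shows "psd M"
proof -
  have "adjoint M = M"
  proof (rule eq_matI)
    fix i j assume "i < dim_row M" "j < dim_col M"
    then show "adjoint M $$ (i, j) = M $$ (i, j)"
      using assms(1) assms(2)[of j i] by (simp add: adjoint_def)
  qed (use assms(1) in \<open>simp_all add: adjoint_def\<close>)
  then show ?thesis
    using assms unfolding psd_def hermitian_def by (auto simp: sesq_vec)
qed

text \<open>A Cauchy--Schwarz argument: expand the nonnegative value at x - cnj (sesq x y) y.\<close>
lemma sesq_psd_eq_0:
  assumes "psd M" "M \<in> carrier_mat n n" "Re (sesq n M x x) = 0" "Re (sesq n M y y) = 0"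
  shows "sesq n M x y = 0"
proof -
  let ?q = "sesq n M x y"
  let ?t = "- cnj ?q"
  have "sesq n M (\<lambda>z. 1 * x z + ?t * y z) (\<lambda>z. 1 * x z + ?t * y z)
     = sesq n M x x + ?t * ?q + cnj ?t * sesq n M y x + cnj ?t * ?t * sesq n M y y"
    using sesq_add[of n M 1 x ?t y 1 x ?t y] by simp
  also have "sesq n M y x = cnj ?q"
    using sesq_cnj_hermitian assms(1,2) unfolding psd_def by metis
  finally have e: "sesq n M (\<lambda>z. 1 * x z + ?t * y z) (\<lambda>z. 1 * x z + ?t * y z)
     = sesq n M x x - 2 * (cnj ?q * ?q) + ?q * cnj ?q * sesq n M y y" by simp
  have qq: "?q * cnj ?q = of_real ((cmod ?q)^2)" by (rule complex_norm_square[symmetric])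
  have "Re (cnj ?q * ?q) = (cmod ?q)^2" by (subst mult.commute, subst qq) simp
  moreover have "Re (?q * cnj ?q * sesq n M y y) = (cmod ?q)^2 * Re (sesq n M y y)"
    by (subst qq) simp
  moreover have "Re (sesq n M (\<lambda>z. 1 * x z + ?t * y z) (\<lambda>z. 1 * x z + ?t * y z)) \<ge> 0"
    by (rule sesq_psd_nonneg[OF assms(1,2)])
  ultimately have "(cmod ?q)^2 \<le> 0" using e assms(3,4) by simp
  thus ?thesis by simp
qed

lemma sesq_gram:
  "sesq m (mat m m (\<lambda>(i, j). sesq n M (h i) (h j))) f g
   = sesq n M (\<lambda>z. \<Sum>i<m. f i * h i z) (\<lambda>w. \<Sum>j<m. g j * h j w)"
proof -
  have "sesq m (mat m m (\<lambda>(i, j). sesq n M (h i) (h j))) f g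
      = (\<Sum>i<m. \<Sum>j<m. cnj (f i) * g j * sesq n M (h i) (h j))"
    unfolding sesq_def by (intro sum.cong refl) (simp add: mult_ac)
  also have "\<dots> = sesq n M (\<lambda>z. \<Sum>i<m. f i * h i z) (\<lambda>w. \<Sum>j<m. g j * h j w)"
    by (rule sesq_sum[symmetric]) auto
  finally show ?thesis .
qed

lemma psd_gram:
  assumes "psd M" "M \<in> carrier_mat n n"
  shows "psd (mat m m (\<lambda>(i, j). sesq n M (h i) (h j)))"
proof (rule psd_sesqI)
  have "hermitian M" using assms(1) unfolding psd_def by simp
  then show "\<And>i j. i < m \<Longrightarrow> j < m \<Longrightarrow>
      mat m m (\<lambda>(i, j). sesq n M (h i) (h j)) $$ (j, i) = cnj (mat m m (\<lambda>(i, j). sesq n M (h i) (h j)) $$ (i, j))"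
    using sesq_cnj_hermitian assms(2) by simp
  show "\<And>x. Re (sesq m (mat m m (\<lambda>(i, j). sesq n M (h i) (h j))) x x) \<ge> 0"
    unfolding sesq_gram by (rule sesq_psd_nonneg[OF assms])
qed simp

lemma index_mult_mat_sum:
  assumes "A \<in> carrier_mat m k" "B \<in> carrier_mat k l" "i < m" "j < l"
  shows "(A * B) $$ (i, j) = (\<Sum>z<k. A $$ (i, z) * B $$ (z, j))"
  using assms by (auto simp: scalar_prod_def atLeast0LessThan intro!: sum.cong)

lemma index_mult_mult_mat_sesq:
  assumes A: "A \<in> carrier_mat m n" and M: "M \<in> carrier_mat n n" and B: "B \<in> carrier_mat n l"
    and ij: "i < m" "j < l"
    and "\<And>z. z < n \<Longrightarrow> A $$ (i, z) = a * cnj (f z)" and "\<And>w. w < n \<Longrightarrow> B $$ (w, j) = g w * b"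
  shows "(A * M * B) $$ (i, j) = a * b * sesq n M f g"
proof -
  have "(A * M * B) $$ (i, j) = (\<Sum>w<n. (A * M) $$ (i, w) * B $$ (w, j))"
    by (rule index_mult_mat_sum[OF mult_carrier_mat[OF A M] B ij])
  also have "\<dots> = (\<Sum>w<n. (\<Sum>z<n. A $$ (i, z) * M $$ (z, w)) * B $$ (w, j))"
    by (intro sum.cong refl, subst index_mult_mat_sum[OF A M ij(1)]) auto
  also have "\<dots> = (\<Sum>w<n. \<Sum>z<n. a * b * (cnj (f z) * M $$ (z, w) * g w))"
    using assms(6,7) by (auto simp: sum_distrib_left sum_distrib_right mult_ac intro!: sum.cong)
  also have "\<dots> = a * b * sesq n M f g"
    unfolding sesq_def by (subst sum.swap) (simp add: sum_distrib_left)
  finally show ?thesis .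
qed

definition tensor_fun :: "nat \<Rightarrow> (nat \<Rightarrow> complex) \<Rightarrow> (nat \<Rightarrow> complex) \<Rightarrow> nat \<Rightarrow> complex" where
  "tensor_fun dA f g z = f (z div dA) * g (z mod dA)"

lemma div_mod_less_mult:
  assumes "x < dS * (dA::nat)"
  shows "x div dA < dS" "x mod dA < dA"
proof -
  have "dA > 0" using assms by (cases dA) auto
  then show "x mod dA < dA" by simp
  show "x div dA < dS" using assms less_mult_imp_div_less[of x dS dA] by (simp add: mult.commute)
qed

lemma tensor_fun_expand_left:
  assumes "z < dS * dA"
  shows "tensor_fun dA f g z = (\<Sum>i<dS. f i * tensor_fun dA (unit_fun i) g z)"
proof -
  have "(\<Sum>i<dS. f i * tensor_fun dA (unit_fun i) g z) = (\<Sum>i<dS. f i * unit_fun i (z div dA)) * g (z mod dA)"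
    unfolding tensor_fun_def by (simp add: sum_distrib_left sum_distrib_right mult_ac)
  then show ?thesis using div_mod_less_mult[OF assms] by (simp add: sum_unit_fun tensor_fun_def)
qed

lemma tensor_fun_expand_right:
  assumes "z < dS * dA"
  shows "tensor_fun dA f g z = (\<Sum>c<dA. g c * tensor_fun dA f (unit_fun c) z)"
proof -
  have "(\<Sum>c<dA. g c * tensor_fun dA f (unit_fun c) z) = f (z div dA) * (\<Sum>c<dA. g c * unit_fun c (z mod dA))"
    unfolding tensor_fun_def by (simp add: sum_distrib_left mult_ac)
  then show ?thesis using div_mod_less_mult[OF assms] by (simp add: sum_unit_fun tensor_fun_def)
qed

lemma tensor_fun_unit_fun: "tensor_fun dA (unit_fun (x div dA)) (unit_fun (x mod dA)) = unit_fun x"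
  unfolding tensor_fun_def unit_fun_def by (auto simp: fun_eq_iff) (metis div_mult_mod_eq)

lemma tensor_fun_add_right:
  "tensor_fun dA f (\<lambda>z. a * x z + b * y z) = (\<lambda>z. a * tensor_fun dA f x z + b * tensor_fun dA f y z)"
  unfolding tensor_fun_def by (simp add: fun_eq_iff algebra_simps)

section \<open>Measuring the second factor\<close>

context
  fixes dS dA :: nat and v :: "complex vec"
  assumes v: "v \<in> carrier_vec dA"
begin

lemma kron_id_ketbra_carrier: "kron (1\<^sub>m dS) (ketbra v) \<in> carrier_mat (dS * dA) (dS * dA)"
  using v unfolding kron_def ketbra_def by auto

lemma kron_id_ketbra_entry:
  assumes "x < dS * dA" "y < dS * dA"
  shows "kron (1\<^sub>m dS) (ketbra v) $$ (x, y)
    = v $ (x mod dA) * cnj (tensor_fun dA (unit_fun (x div dA)) (vec_index v) y)"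
    "kron (1\<^sub>m dS) (ketbra v) $$ (x, y)
    = tensor_fun dA (unit_fun (y div dA)) (vec_index v) x * cnj (v $ (y mod dA))"
  using assms v div_mod_less_mult[OF assms(1)] div_mod_less_mult[OF assms(2)]
  unfolding kron_def ketbra_def tensor_fun_def unit_fun_def by auto

lemma outcome_prob_eq:
  assumes r: "\<rho> \<in> carrier_mat (dS * dA) (dS * dA)"
  shows "outcome_prob dS \<rho> v = (\<Sum>i<dS.
    Re (sesq (dS * dA) \<rho> (tensor_fun dA (unit_fun i) (vec_index v)) (tensor_fun dA (unit_fun i) (vec_index v))))"
proof -
  let ?n = "dS * dA"
  let ?P = "kron (1\<^sub>m dS) (ketbra v)"
  let ?t = "\<lambda>i. tensor_fun dA (unit_fun i) (vec_index v)"
  have P: "?P \<in> carrier_mat ?n ?n" by (rule kron_id_ketbra_carrier)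
  have "mtrace (?P * \<rho>) = (\<Sum>x<?n. \<Sum>z<?n. ?P $$ (x, z) * \<rho> $$ (z, x))"
    unfolding mtrace_def using P by (intro sum.cong, simp, subst index_mult_mat_sum[OF P r]) auto
  also have "\<dots> = (\<Sum>x<?n. \<Sum>z<?n. \<Sum>i<dS. cnj (?t i z) * \<rho> $$ (z, x) * ?t i x)"
  proof (intro sum.cong refl)
    fix x z assume x: "x \<in> {..<?n}" and z: "z \<in> {..<?n}"
    have "(\<Sum>i<dS. cnj (?t i z) * \<rho> $$ (z, x) * ?t i x)
        = (\<Sum>i<dS. if i = x div dA then cnj (?t (x div dA) z) * \<rho> $$ (z, x) * v $ (x mod dA) else 0)"
      by (intro sum.cong refl) (auto simp: tensor_fun_def unit_fun_def)
    also have "\<dots> = cnj (?t (x div dA) z) * \<rho> $$ (z, x) * v $ (x mod dA)"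
      using div_mod_less_mult[of x dS dA] x by simp
    finally show "?P $$ (x, z) * \<rho> $$ (z, x) = (\<Sum>i<dS. cnj (?t i z) * \<rho> $$ (z, x) * ?t i x)"
      using kron_id_ketbra_entry(1)[of x z] x z by (simp add: mult_ac)
  qed
  also have "\<dots> = (\<Sum>i<dS. sesq ?n \<rho> (?t i) (?t i))"
    unfolding sesq_def by (subst sum.swap, subst (2) sum.swap, subst sum.swap) (rule refl)
  finally show ?thesis unfolding outcome_prob_def by (simp add: Re_sum)
qed

lemma cond_state_eq:
  assumes r: "\<rho> \<in> carrier_mat (dS * dA) (dS * dA)" and unit: "(\<Sum>a<dA. v $ a * cnj (v $ a)) = 1"
  shows "cond_state dS dA \<rho> v = (1 / complex_of_real (outcome_prob dS \<rho> v)) \<cdot>\<^sub>m mat dS dS (\<lambda>(i, j).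
    sesq (dS * dA) \<rho> (tensor_fun dA (unit_fun i) (vec_index v)) (tensor_fun dA (unit_fun j) (vec_index v)))"
proof -
  let ?n = "dS * dA"
  let ?P = "kron (1\<^sub>m dS) (ketbra v)"
  let ?t = "\<lambda>i. tensor_fun dA (unit_fun i) (vec_index v)"
  have P: "?P \<in> carrier_mat ?n ?n" by (rule kron_id_ketbra_carrier)
  have sandwich: "(?P * \<rho> * ?P) $$ (x, y)
      = v $ (x mod dA) * cnj (v $ (y mod dA)) * sesq ?n \<rho> (?t (x div dA)) (?t (y div dA))"
    if "x < ?n" "y < ?n" for x y
  proof (rule index_mult_mult_mat_sesq[OF P r P that])
    show "?P $$ (x, z) = v $ (x mod dA) * cnj (?t (x div dA) z)" if "z < ?n" for z
      by (rule kron_id_ketbra_entry(1)[OF \<open>x < ?n\<close> that])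
    show "?P $$ (w, y) = ?t (y div dA) w * cnj (v $ (y mod dA))" if "w < ?n" for w
      by (rule kron_id_ketbra_entry(2)[OF that \<open>y < ?n\<close>])
  qed
  have ptrace: "ptrace_A dS dA (?P * \<rho> * ?P) $$ (i, j) = sesq ?n \<rho> (?t i) (?t j)"
    if ij: "i < dS" "j < dS" for i j
  proof -
    have idx: "k * dA + a < ?n" if "a < dA" "k < dS" for a k
    proof -
      have "k * dA + a < (k + 1) * dA" using that by simp
      also have "\<dots> \<le> ?n" using that by (intro mult_le_mono1) simp
      finally show ?thesis .
    qed
    have "ptrace_A dS dA (?P * \<rho> * ?P) $$ (i, j) = (\<Sum>a<dA. v $ a * cnj (v $ a) * sesq ?n \<rho> (?t i) (?t j))"
      unfolding ptrace_A_def using ij by (auto simp: sandwich idx intro!: sum.cong)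
    also have "\<dots> = sesq ?n \<rho> (?t i) (?t j)" using unit by (simp add: sum_distrib_right[symmetric])
    finally show ?thesis .
  qed
  have "ptrace_A dS dA (?P * \<rho> * ?P) = mat dS dS (\<lambda>(i, j). sesq ?n \<rho> (?t i) (?t j))"
    by (rule eq_matI) (simp_all add: ptrace, simp_all add: ptrace_A_def)
  then show ?thesis unfolding cond_state_def by simp
qed

end

lemma unitary_col_norm:
  assumes "unitary n U" "a < n"
  shows "(\<Sum>c<n. col U a $ c * cnj (col U a $ c)) = 1"
proof -
  have U: "U \<in> carrier_mat n n" and e: "adjoint U * U = 1\<^sub>m n" using assms unfolding unitary_def by auto
  have aU: "adjoint U \<in> carrier_mat n n" using U unfolding adjoint_def by auto
  have "1 = (adjoint U * U) $$ (a, a)" using e assms by simp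
  also have "\<dots> = (\<Sum>c<n. adjoint U $$ (a, c) * U $$ (c, a))"
    by (rule index_mult_mat_sum[OF aU U assms(2) assms(2)])
  also have "\<dots> = (\<Sum>c<n. col U a $ c * cnj (col U a $ c))"
    using U assms(2) by (auto simp: adjoint_def intro!: sum.cong)
  finally show ?thesis ..
qed

lemma unitary_rows_orthonormal:
  assumes "unitary n R" "i < n" "j < n"
  shows "(\<Sum>k<n. R $$ (i, k) * cnj (R $$ (j, k))) = (if i = j then 1 else 0)"
proof -
  have R: "R \<in> carrier_mat n n" and e: "adjoint R * R = 1\<^sub>m n" using assms unfolding unitary_def by auto
  have aR: "adjoint R \<in> carrier_mat n n" using R unfolding adjoint_def by auto
  have "(\<Sum>k<n. R $$ (i, k) * cnj (R $$ (j, k))) = (\<Sum>k<n. R $$ (i, k) * adjoint R $$ (k, j))"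
    using assms R by (auto simp: adjoint_def intro!: sum.cong)
  also have "\<dots> = (R * adjoint R) $$ (i, j)"
    by (rule index_mult_mat_sum[OF R aR assms(2,3), symmetric])
  also have "\<dots> = (if i = j then 1 else 0)"
    using mat_mult_left_right_inverse[OF aR R e] assms by simp
  finally show ?thesis .
qed

lemma unitary_one: "unitary n (1\<^sub>m n)"
proof -
  have "adjoint (1\<^sub>m n) = (1\<^sub>m n :: complex mat)"
    by (rule eq_matI) (auto simp: adjoint_def)
  then show ?thesis unfolding unitary_def by simp
qed

lemma sum_two_point_support:
  fixes g :: "nat \<Rightarrow> 'a::comm_monoid_add"
  assumes "c < n" "d < n" "c \<noteq> d" "\<And>z. z < n \<Longrightarrow> z \<noteq> c \<Longrightarrow> z \<noteq> d \<Longrightarrow> g z = 0"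
  shows "(\<Sum>z<n. g z) = g c + g d"
proof -
  have "(\<Sum>z<n. g z) = (\<Sum>z\<in>{c, d}. g z)"
    using assms by (intro sum.mono_neutral_right) auto
  thus ?thesis using assms(3) by simp
qed

definition rotation_mat :: "nat \<Rightarrow> nat \<Rightarrow> nat \<Rightarrow> complex \<Rightarrow> complex \<Rightarrow> complex mat" where
  "rotation_mat n c d \<alpha> \<gamma> = mat n n (\<lambda>(x, y).
     if x = c \<and> y = c then \<alpha> else if x = c \<and> y = d then - cnj \<gamma>
     else if x = d \<and> y = c then \<gamma> else if x = d \<and> y = d then cnj \<alpha>
     else if x = y then 1 else 0)"

lemma unitary_rotation_mat:
  assumes cd: "c < n" "d < n" "c \<noteq> d" and norm: "cnj \<alpha> * \<alpha> + cnj \<gamma> * \<gamma> = 1"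
  shows "unitary n (rotation_mat n c d \<alpha> \<gamma>)"
proof -
  let ?U = "rotation_mat n c d \<alpha> \<gamma>"
  have U: "?U \<in> carrier_mat n n" unfolding rotation_mat_def by auto
  have aU: "adjoint ?U \<in> carrier_mat n n" using U unfolding adjoint_def by auto
  have norm': "\<alpha> * cnj \<alpha> + \<gamma> * cnj \<gamma> = 1" "\<gamma> * cnj \<gamma> + \<alpha> * cnj \<alpha> = 1"
    using norm by (simp_all add: mult.commute add.commute)
  have "adjoint ?U * ?U = 1\<^sub>m n"
  proof (rule eq_matI)
    fix x y assume "x < dim_row (1\<^sub>m n)" "y < dim_col (1\<^sub>m n)"
    then have xy: "x < n" "y < n" by auto
    have e: "(adjoint ?U * ?U) $$ (x, y) = (\<Sum>z<n. cnj (?U $$ (z, x)) * ?U $$ (z, y))"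
      using index_mult_mat_sum[OF aU U xy] U xy by (auto simp: adjoint_def intro!: sum.cong)
    show "(adjoint ?U * ?U) $$ (x, y) = 1\<^sub>m n $$ (x, y)"
    proof (cases "x \<in> {c, d}")
      case False
      have "(\<Sum>z<n. cnj (?U $$ (z, x)) * ?U $$ (z, y)) = (\<Sum>z<n. if z = x then ?U $$ (x, y) else 0)"
        using False xy by (intro sum.cong refl) (auto simp: rotation_mat_def)
      also have "\<dots> = ?U $$ (x, y)" using xy by (simp add: sum.delta)
      finally show ?thesis using e False xy by (auto simp: rotation_mat_def)
    next
      case xin: True
      show ?thesis
      proof (cases "y \<in> {c, d}")
        case False
        have "(\<Sum>z<n. cnj (?U $$ (z, x)) * ?U $$ (z, y)) = (\<Sum>z<n. if z = y then cnj (?U $$ (y, x)) else 0)"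
          using False xy by (intro sum.cong refl) (auto simp: rotation_mat_def)
        also have "\<dots> = 0" using xy xin False by (auto simp: rotation_mat_def)
        finally show ?thesis using e False xin xy by auto
      next
        case yin: True
        have "(\<Sum>z<n. cnj (?U $$ (z, x)) * ?U $$ (z, y)) =
              cnj (?U $$ (c, x)) * ?U $$ (c, y) + cnj (?U $$ (d, x)) * ?U $$ (d, y)"
          by (rule sum_two_point_support[OF cd]) (use xin yin cd in \<open>auto simp: rotation_mat_def\<close>)
        then show ?thesis using e xin yin cd norm norm' by (auto simp: rotation_mat_def mult.commute)
      qed
    qed
  qed (use aU U in auto)
  then show ?thesis using U unfolding unitary_def by simp
qed

lemma col_rotation_mat:
  assumes "c < n" "d < n" "c \<noteq> d" "z < n"
  shows "col (rotation_mat n c d \<alpha> \<gamma>) c $ z = \<alpha> * unit_fun c z + \<gamma> * unit_fun d z"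
  using assms unfolding rotation_mat_def unit_fun_def by auto

text \<open>The test vectors (3, 4) / 5 and (3, 4i) / 5 give q + r = 0 and q - r = 0.\<close>
lemma sesq2_eq_0_on_sphere:
  fixes p q r s :: complex
  assumes sphere: "\<And>\<alpha> \<gamma>. cnj \<alpha> * \<alpha> + cnj \<gamma> * \<gamma> = 1 \<Longrightarrow>
    cnj \<alpha> * \<alpha> * p + cnj \<alpha> * \<gamma> * q + cnj \<gamma> * \<alpha> * r + cnj \<gamma> * \<gamma> * s = 0"
  shows "q = 0"
proof -
  have p: "p = 0" using sphere[of 1 0] by simp
  have s: "s = 0" using sphere[of 0 1] by simp
  have "cnj (3/5) * (3/5) * p + cnj (3/5) * (4/5) * q + cnj (4/5) * (3/5) * r + cnj (4/5) * (4/5) * s = 0"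
    by (rule sphere) (simp add: complex_eq_iff)
  then have "(12/25) * (q + r) = 0" using p s by (simp add: field_simps)
  then have sum: "q + r = 0" by (simp only: mult_eq_0_iff) simp
  have "cnj (3/5) * (3/5) * p + cnj (3/5) * (4 * \<i> / 5) * q + cnj (4 * \<i> / 5) * (3/5) * r
      + cnj (4 * \<i> / 5) * (4 * \<i> / 5) * s = 0"
    by (rule sphere) (simp add: complex_eq_iff)
  then have "(12 * \<i> / 25) * (q - r) = 0" using p s by (simp add: field_simps)
  then have "q - r = 0" by (simp only: mult_eq_0_iff) simp
  with sum show ?thesis by (simp add: algebra_simps)
qed

section \<open>Conditional states diagonal in a fixed basis\<close>

locale diagonal_conditional_states =
  fixes dS dA :: nat and \<rho> R :: "complex mat"
  assumes carrier_rho: "\<rho> \<in> carrier_mat (dS * dA) (dS * dA)"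
    and psd_rho: "psd \<rho>"
    and unitary_R: "unitary dS R"
    and diagonal_cond_state: "\<And>U a. unitary dA U \<Longrightarrow> a < dA \<Longrightarrow> outcome_prob dS \<rho> (col U a) > 0 \<Longrightarrow>
      diagonal_in dS R (cond_state dS dA \<rho> (col U a))"
begin

definition block :: "nat \<Rightarrow> nat \<Rightarrow> (nat \<Rightarrow> complex) \<Rightarrow> (nat \<Rightarrow> complex) \<Rightarrow> complex" where
  "block k l u w =
     sesq (dS * dA) \<rho> (tensor_fun dA (\<lambda>i. R $$ (i, k)) u) (tensor_fun dA (\<lambda>i. R $$ (i, l)) w)"

lemma block_cong:
  assumes "\<And>c. c < dA \<Longrightarrow> u c = u' c" "\<And>c. c < dA \<Longrightarrow> w c = w' c"
  shows "block k l u w = block k l u' w'"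
  unfolding block_def using assms div_mod_less_mult by (intro sesq_cong) (auto simp: tensor_fun_def)

lemma block_add:
  "block k l (\<lambda>z. a * x z + b * y z) (\<lambda>z. a * x z + b * y z)
   = cnj a * a * block k l x x + cnj a * b * block k l x y
     + cnj b * a * block k l y x + cnj b * b * block k l y y"
  unfolding block_def tensor_fun_add_right by (rule sesq_add)

lemma block_offdiag_column_eq_0:
  assumes U: "unitary dA U" and a: "a < dA" and kl: "k < dS" "l < dS" "k \<noteq> l"
  shows "block k l (vec_index (col U a)) (vec_index (col U a)) = 0"
proof -
  let ?n = "dS * dA"
  define v where "v = col U a"
  let ?t = "\<lambda>i. tensor_fun dA (unit_fun i) (vec_index v)"
  define G where "G = mat dS dS (\<lambda>(i, j). sesq ?n \<rho> (?t i) (?t j))"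
  have v: "v \<in> carrier_vec dA" using U unfolding v_def unitary_def by auto
  have G: "G \<in> carrier_mat dS dS" unfolding G_def by simp
  have block_G: "block k l (vec_index v) (vec_index v) = sesq dS G (\<lambda>i. R $$ (i, k)) (\<lambda>i. R $$ (i, l))"
    unfolding G_def sesq_gram block_def by (intro sesq_cong) (simp_all add: tensor_fun_expand_left)
  have p: "outcome_prob dS \<rho> v = (\<Sum>i<dS. Re (G $$ (i, i)))"
    unfolding outcome_prob_eq[OF v carrier_rho] G_def by simp
  show ?thesis
  proof (cases "outcome_prob dS \<rho> v > 0")
    case True
    have R: "R \<in> carrier_mat dS dS" using unitary_R unfolding unitary_def by simp
    have cond_state: "cond_state dS dA \<rho> v = (1 / complex_of_real (outcome_prob dS \<rho> v)) \<cdot>\<^sub>m G"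
      unfolding G_def by (rule cond_state_eq[OF v carrier_rho unitary_col_norm[OF U a, folded v_def]])
    have "0 = (adjoint R * cond_state dS dA \<rho> v * R) $$ (k, l)"
      using diagonal_cond_state[OF U a] True kl unfolding v_def diagonal_in_def by simp
    also have "\<dots> = sesq dS (cond_state dS dA \<rho> v) (\<lambda>i. R $$ (i, k)) (\<lambda>i. R $$ (i, l))"
      using R kl cond_state G
      by (subst index_mult_mult_mat_sesq[where a = 1 and b = 1]) (auto simp: adjoint_def)
    also have "\<dots> = (1 / complex_of_real (outcome_prob dS \<rho> v)) * block k l (vec_index v) (vec_index v)"
      unfolding cond_state block_G by (rule sesq_smult_mat[OF G])
    finally show ?thesis using True unfolding v_def by simp
  next
    case False
    have nonneg: "Re (G $$ (i, i)) \<ge> 0" if "i < dS" for i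
      using that sesq_psd_nonneg[OF psd_rho carrier_rho] unfolding G_def by simp
    have "(\<Sum>i<dS. Re (G $$ (i, i))) = 0"
      using False p sum_nonneg[of "{..<dS}" "\<lambda>i. Re (G $$ (i, i))"] nonneg by force
    then have "Re (G $$ (i, i)) = 0" if "i < dS" for i
      using sum_nonneg_eq_0_iff[of "{..<dS}" "\<lambda>i. Re (G $$ (i, i))"] nonneg that by simp
    then have "sesq ?n \<rho> (?t i) (?t j) = 0" if "i < dS" "j < dS" for i j
      using that by (intro sesq_psd_eq_0[OF psd_rho carrier_rho]) (simp_all add: G_def)
    then have "sesq dS G f g = 0" for f g
      unfolding sesq_def G_def by (intro sum.neutral ballI) simp
    then show ?thesis unfolding block_G v_def[symmetric] .
  qed
qed

lemma block_offdiag_unit_fun_eq_0: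
  assumes kl: "k < dS" "l < dS" "k \<noteq> l" and cd: "c < dA" "d < dA"
  shows "block k l (unit_fun c) (unit_fun d) = 0"
proof (cases "c = d")
  case True
  have "block k l (unit_fun c) (unit_fun c) = block k l (vec_index (col (1\<^sub>m dA) c)) (vec_index (col (1\<^sub>m dA) c))"
    using cd by (intro block_cong) (auto simp: unit_fun_def)
  then show ?thesis using block_offdiag_column_eq_0[OF unitary_one cd(1) kl] True by simp
next
  case False
  let ?B = "\<lambda>c d. block k l (unit_fun c) (unit_fun d)"
  have "cnj \<alpha> * \<alpha> * ?B c c + cnj \<alpha> * \<gamma> * ?B c d + cnj \<gamma> * \<alpha> * ?B d c + cnj \<gamma> * \<gamma> * ?B d d = 0"
    if "cnj \<alpha> * \<alpha> + cnj \<gamma> * \<gamma> = 1" for \<alpha> \<gamma>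
  proof -
    let ?U = "rotation_mat dA c d \<alpha> \<gamma>"
    have "cnj \<alpha> * \<alpha> * ?B c c + cnj \<alpha> * \<gamma> * ?B c d + cnj \<gamma> * \<alpha> * ?B d c + cnj \<gamma> * \<gamma> * ?B d d
        = block k l (\<lambda>z. \<alpha> * unit_fun c z + \<gamma> * unit_fun d z) (\<lambda>z. \<alpha> * unit_fun c z + \<gamma> * unit_fun d z)"
      by (rule block_add[symmetric])
    also have "\<dots> = block k l (vec_index (col ?U c)) (vec_index (col ?U c))"
      using cd False by (intro block_cong) (simp_all add: col_rotation_mat)
    also have "\<dots> = 0"
      by (rule block_offdiag_column_eq_0[OF unitary_rotation_mat[OF cd False that] cd(1) kl])
    finally show ?thesis .
  qed
  then show ?thesis by (rule sesq2_eq_0_on_sphere)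
qed

definition diag_block :: "nat \<Rightarrow> complex mat" where
  "diag_block k = mat dA dA (\<lambda>(c, d). block k k (unit_fun c) (unit_fun d))"

lemma psd_diag_block: "psd (diag_block k)"
  unfolding diag_block_def block_def by (rule psd_gram[OF psd_rho carrier_rho])

lemma unit_fun_eq_sum_tensor_col:
  assumes "x < dS * dA" "z < dS * dA"
  shows "unit_fun x z = (\<Sum>k<dS. cnj (R $$ (x div dA, k)) * tensor_fun dA (\<lambda>i. R $$ (i, k)) (unit_fun (x mod dA)) z)"
proof -
  have "(\<Sum>k<dS. cnj (R $$ (x div dA, k)) * tensor_fun dA (\<lambda>i. R $$ (i, k)) (unit_fun (x mod dA)) z)
      = (\<Sum>k<dS. R $$ (z div dA, k) * cnj (R $$ (x div dA, k))) * unit_fun (x mod dA) (z mod dA)"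
    unfolding tensor_fun_def by (simp add: sum_distrib_left sum_distrib_right mult_ac)
  also have "\<dots> = tensor_fun dA (unit_fun (x div dA)) (unit_fun (x mod dA)) z"
    using unitary_rows_orthonormal[OF unitary_R] div_mod_less_mult assms
    by (simp add: tensor_fun_def unit_fun_def)
  finally show ?thesis by (simp add: tensor_fun_unit_fun)
qed

lemma rho_entry_eq_sum_block:
  assumes xy: "x < dS * dA" "y < dS * dA"
  shows "\<rho> $$ (x, y)
    = (\<Sum>k<dS. R $$ (x div dA, k) * cnj (R $$ (y div dA, k)) * block k k (unit_fun (x mod dA)) (unit_fun (y mod dA)))"
proof -
  let ?b = "\<lambda>k l. R $$ (x div dA, k) * cnj (R $$ (y div dA, l)) * block k l (unit_fun (x mod dA)) (unit_fun (y mod dA))"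
  have offdiag: "?b k l = 0" if "k < dS" "l < dS" "l \<noteq> k" for k l
    using that block_offdiag_unit_fun_eq_0 div_mod_less_mult xy by simp
  have "\<rho> $$ (x, y) = sesq (dS * dA) \<rho> (unit_fun x) (unit_fun y)"
    by (rule sesq_unit_fun[symmetric, OF xy])
  also have "\<dots> = (\<Sum>k<dS. \<Sum>l<dS. ?b k l)"
    unfolding block_def using xy
    by (subst sesq_cong[OF unit_fun_eq_sum_tensor_col unit_fun_eq_sum_tensor_col]) (simp_all add: sesq_sum)
  also have "\<dots> = (\<Sum>k<dS. ?b k k)"
  proof (rule sum.cong[OF refl])
    fix k assume k: "k \<in> {..<dS}"
    then have "(\<Sum>l<dS. ?b k l) = (\<Sum>l<dS. if l = k then ?b k k else 0)"
      by (intro sum.cong refl) (simp add: offdiag)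
    with k show "(\<Sum>l<dS. ?b k l) = ?b k k" by simp
  qed
  finally show ?thesis .
qed

lemma rho_eq_sum_kron_diag_block:
  "\<rho> = mat (dS * dA) (dS * dA) (\<lambda>ij. \<Sum>k<dS. kron (ketbra (col R k)) (diag_block k) $$ ij)"
proof -
  have "R \<in> carrier_mat dS dS" using unitary_R unfolding unitary_def by simp
  then show ?thesis
    using carrier_rho div_mod_less_mult
    by (intro eq_matI) (auto simp: rho_entry_eq_sum_block kron_def ketbra_def diag_block_def)
qed

end

theorem lemma2:
  fixes dS dA :: nat and \<rho> R :: "complex mat"
  assumes rho: "density_matrix (dS * dA) \<rho>"
    and R: "unitary dS R"
    and cond: "\<And>U a. unitary dA U \<Longrightarrow> a < dA \<Longrightarrow> outcome_prob dS \<rho> (col U a) > 0 \<Longrightarrow>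
                 diagonal_in dS R (cond_state dS dA \<rho> (col U a))"
  shows "\<exists>C :: nat \<Rightarrow> complex mat.
           (\<forall>k<dS. C k \<in> carrier_mat dA dA \<and> psd (C k)) \<and>
           \<rho> = mat (dS * dA) (dS * dA)
                 (\<lambda>ij. \<Sum>k<dS. kron (ketbra (col R k)) (C k) $$ ij)"
proof -
  interpret diagonal_conditional_states dS dA \<rho> R
    using rho R cond by unfold_locales (auto simp: density_matrix_def)
  show ?thesis
    by (intro exI[of _ diag_block] conjI allI impI psd_diag_block rho_eq_sum_kron_diag_block)
      (simp add: diag_block_def)
qed

end
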